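(* Let $d\ge 0$, $e=2^d$, and let $\nu$ be a suitable tuple. For every even $n$ with $0\le n\le 2^e-2$, the vectors $M_d^\nu w_n$ and $M_d^\nu w_{n+1}$ are complementary, i.e. $M_d^\nu w_{n+1}=M_d^\nu w_n+\mathbf 1$, where $\mathbf 1$ is the all-ones vector.
   Context: Over $\mathbb{F}_2$, $M_0=(1)$ and $M_{d+1}=\begin{pmatrix} M_d & M_d\\ 0 & M_d\end{pmatrix}$, so $M_d$ is $e\times e$ with $e=2^d$. $w_0,\dots,w_{2^e-1}$ are all vectors of $\mathbb{F}_2^e$ in increasing lexicographic order. $\sigma(a_1\cdots a_n)=a_na_1\cdots a_{n-1}$. A tuple $\nu=(n_1,\dots,n_e)$ of non-negative integers is suitable if $n_e=0$ and $n_{i+1}\le n_i\le n_{i+1}+1$ for $1\le i\le e-1$. If $C_1,\dots,C_e$ are the columns of $M_d$, then $M_d^\nu=(\sigma^{n_1}(C_1),\dots,\sigma^{n_e}(C_e))$. *)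

theory Defs
  imports "Jordan_Normal_Form.Matrix" "HOL-Library.Z2"
begin

text \<open>Matrices and vectors over F_2 (type bit), 0-indexed.\<close>

fun Mmat :: "nat \<Rightarrow> bit mat" where
  "Mmat 0 = mat 1 1 (\<lambda>_. 1)"
| "Mmat (Suc d) = four_block_mat (Mmat d) (Mmat d) (0\<^sub>m (2^d) (2^d)) (Mmat d)"

definition sigma :: "'a vec \<Rightarrow> 'a vec" where
  "sigma v = vec (dim_vec v) (\<lambda>i. v $ ((i + dim_vec v - 1) mod dim_vec v))"

text \<open>w n: the n-th vector of F_2^e in increasing lexicographic order,
  i.e. the binary expansion of n with the first coordinate most significant.\<close>
definition wvec :: "nat \<Rightarrow> nat \<Rightarrow> bit vec" where
  "wvec e n = vec e (\<lambda>i. of_nat ((n div 2 ^ (e - 1 - i)) mod 2))"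

text \<open>suitable tuple nu = (n_1,...,n_e), stored as a list (0-indexed)\<close>
definition suitable :: "nat \<Rightarrow> nat list \<Rightarrow> bool" where
  "suitable e nu \<longleftrightarrow> length nu = e \<and> e \<ge> 1 \<and> nu ! (e - 1) = 0 \<and>
     (\<forall>i. i + 1 < e \<longrightarrow> nu ! (i + 1) \<le> nu ! i \<and> nu ! i \<le> nu ! (i + 1) + 1)"

definition Mnu :: "nat \<Rightarrow> nat list \<Rightarrow> bit mat" where
  "Mnu d nu = mat (2^d) (2^d) (\<lambda>(i, j). ((sigma ^^ (nu ! j)) (col (Mmat d) j)) $ i)"

end

theory Submission
  imports Defs
begin

text \<open>For even \<open>n\<close> the binary expansions of \<open>n\<close> and \<open>n + 1\<close> differ only in the last
  coordinate, so \<open>w\<^sub>n\<^sub>+\<^sub>1 = w\<^sub>n + e\<^sub>e\<close> and \<open>M\<^sub>d\<^sup>\<nu> w\<^sub>n\<^sub>+\<^sub>1 = M\<^sub>d\<^sup>\<nu> w\<^sub>n + C\<close> with \<open>C\<close> the last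
  column of \<open>M\<^sub>d\<^sup>\<nu>\<close>. Since \<open>n\<^sub>e = 0\<close>, that column is the last column of \<open>M\<^sub>d\<close>,
  which is all ones by the block recursion.\<close>

lemma mult_mat_vec_unit_vec:
  fixes A :: "'a :: semiring_1 mat"
  assumes "A \<in> carrier_mat nr nc" and "j < nc"
  shows "A *\<^sub>v unit_vec nc j = col A j"
  using assms by (intro eq_vecI) auto

lemma Mmat_carrier: "Mmat d \<in> carrier_mat (2^d) (2^d)"
  by (induction d) auto

lemma Mmat_last_col_entry: "i < 2^d \<Longrightarrow> Mmat d $$ (i, 2^d - 1) = 1"
proof (induction d arbitrary: i)
  case 0
  then show ?case by simp
next
  case (Suc d)
  have "(0::nat) < 2^d" by simp
  then have "2 * 2^d - 1 - 2^d = (2::nat)^d - 1" "\<not> 2 * 2^d - 1 < (2::nat)^d" by auto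
  moreover have "i - 2^d < 2^d" using Suc.prems by simp
  ultimately show ?case
    using Mmat_carrier[of d] Suc by (simp add: four_block_mat_def Let_def)
qed

lemma Mmat_last_col: "col (Mmat d) (2^d - 1) = vec (2^d) (\<lambda>_. 1)"
  using Mmat_carrier[of d] Mmat_last_col_entry[of _ d] by (intro eq_vecI) auto

lemma Mnu_carrier: "Mnu d nu \<in> carrier_mat (2^d) (2^d)"
  unfolding Mnu_def by simp

lemma dim_vec_sigma_funpow [simp]: "dim_vec ((sigma ^^ k) v) = dim_vec v"
  by (induction k) (simp_all add: sigma_def)

lemma col_Mnu: "j < 2^d \<Longrightarrow> col (Mnu d nu) j = (sigma ^^ (nu ! j)) (col (Mmat d) j)"
  using Mmat_carrier[of d] by (intro eq_vecI) (auto simp: Mnu_def)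

lemma col_Mnu_last:
  assumes "suitable (2^d) nu"
  shows "col (Mnu d nu) (2^d - 1) = vec (2^d) (\<lambda>_. 1)"
  using assms col_Mnu[of "2^d - 1" d nu] Mmat_last_col[of d] by (simp add: suitable_def)

lemma wvec_Suc_even:
  assumes "even n" and "0 < e"
  shows "wvec e (Suc n) = wvec e n + unit_vec e (e - 1)"
proof (intro eq_vecI)
  fix i assume "i < dim_vec (wvec e n + unit_vec e (e - 1))"
  then have i: "i < e" by (simp add: wvec_def)
  show "wvec e (Suc n) $ i = (wvec e n + unit_vec e (e - 1)) $ i"
  proof (cases "i = e - 1")
    case True
    have "Suc n mod 2 = 1" "n mod 2 = 0" using assms(1) by auto
    with True i assms(2) show ?thesis by (simp add: wvec_def)
  next
    case False
    then obtain k where "e - 1 - i = Suc k" using i by (cases "e - 1 - i") auto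
    moreover have "Suc n div 2 ^ Suc k = n div 2 ^ Suc k"
      using assms(1) by (simp add: div_mult2_eq)
    ultimately show ?thesis using i False by (simp add: wvec_def)
  qed
qed (simp add: wvec_def)

theorem lemma4:
  fixes d n :: nat and nu :: "nat list"
  assumes "suitable (2^d) nu"
    and "even n" and "n \<le> 2 ^ (2 ^ d) - 2"
  shows "Mnu d nu *\<^sub>v wvec (2^d) (n + 1) = Mnu d nu *\<^sub>v wvec (2^d) n + vec (2^d) (\<lambda>_. 1)"
proof -
  have wvec_carrier: "wvec (2^d) n \<in> carrier_vec (2^d)" by (simp add: wvec_def)
  have "Mnu d nu *\<^sub>v wvec (2^d) (n + 1)
      = Mnu d nu *\<^sub>v (wvec (2^d) n + unit_vec (2^d) (2^d - 1))"
    using wvec_Suc_even[OF assms(2)] by simp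
  also have "\<dots> = Mnu d nu *\<^sub>v wvec (2^d) n + col (Mnu d nu) (2^d - 1)"
    using mult_add_distrib_mat_vec[OF Mnu_carrier wvec_carrier unit_vec_carrier]
      mult_mat_vec_unit_vec[OF Mnu_carrier, of "2^d - 1"] by simp
  also have "\<dots> = Mnu d nu *\<^sub>v wvec (2^d) n + vec (2^d) (\<lambda>_. 1)"
    using col_Mnu_last[OF assms(1)] by simp
  finally show ?thesis .
qed

end
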